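(* Let $\mathcal E$ be an exchangeability system for a noncommutative probability space $(\mathcal A,\phi)$ and let $(X_{i,j})_{i\in[m],\,j\in[n_i]}\subseteq\mathcal A$, $n=n_1+\dots+n_m$. Then $$K_m\Big(\prod_{j=1}^{n_1}X_{1,j},\prod_{j=1}^{n_2}X_{2,j},\dots,\prod_{j=1}^{n_m}X_{m,j}\Big)=\sum_{\substack{\sigma\in\Pi_n\\ \sigma\ \text{indecomposable}}}K_\sigma(X_{1,1},\dots,X_{1,n_1},X_{2,1},\dots,X_{m,n_m}),$$ where products are taken in increasing order of $j$.
   Context: A noncommutative probability space is a pair $(\mathcal A,\phi)$ of a complex unital algebra $\mathcal A$ and a unital linear functional $\phi$. An exchangeability system $\mathcal E$ for $(\mathcal A,\phi)$ consists of a noncommutative probability space $(\mathcal U,\tilde\phi)$ and a family $(\iota_k)_{k\in\mathbb N}$ of embeddings (injective unital algebra homomorphisms) $\iota_k:\mathcal A\to\mathcal A_k\subseteq\mathcal U$ with $\tilde\phi\circ\iota_k=\phi$; write $X^{(k)}=\iota_k(X)$. It is required that for all $X_1,\dots,X_n\in\mathcal A$, indices $i_1,\dots,i_n\in\mathbb N$ and bijections $\sigma$ of $\mathbb N$, $\tilde\phi(X_1^{(i_1)}\cdots X_n^{(i_n)})=\tilde\phi(X_1^{(\sigma(i_1))}\cdots X_n^{(\sigma(i_n))})$; this value depends only on the kernel of $j\mapsto i_j$ and for a partition $\pi$ is denoted $\phi_\pi(X_1,\dots,X_n)$. $\Pi_n$ is the lattice of set partitions of $[n]$ under refinement with Möbius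 function $\mu$ and join $\vee$; $K_\pi=\sum_{\sigma\le\pi}\phi_\sigma\,\mu(\sigma,\pi)$, and $K_m(Y_1,\dots,Y_m)=K_{\hat1_m}(Y_1,\dots,Y_m)$ (equivalently $\frac1m\tilde\phi(Y_1^\omega\cdots Y_m^\omega)$ with $Y^\omega=\sum_{k=1}^m\omega^kY^{(k)}$, $\omega$ a primitive $m$-th root of unity). Identify $[n]$ with $\{(i,j):i\in[m],j\in[n_i]\}$ in lexicographic order. Each $\pi\in\Pi_m$ induces $\tilde\pi\in\Pi_n$ with blocks $\{(i,j):i\in B,j\in[n_i]\}$ for $B\in\pi$. A partition $\sigma\in\Pi_n$ is indecomposable if $\sigma\vee\tilde{\hat0}_m=\tilde{\hat1}_m$, where $\hat0_m,\hat1_m$ are the minimal and maximal elements of $\Pi_m$. *)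

theory Defs
  imports Complex_Main "HOL-Library.Disjoint_Sets"
begin

text \<open>A complex unital algebra is modelled as a type of class ring_1 together with a
  complex scalar multiplication making it a complex vector space, compatible with the
  product.\<close>

locale nc_prob_space =
  fixes scl :: "complex \<Rightarrow> 'a::ring_1 \<Rightarrow> 'a"
    and phi :: "'a \<Rightarrow> complex"
  assumes vs: "vector_space scl"
    and scl_mult_left: "\<And>c x y. scl c (x * y) = scl c x * y"
    and scl_mult_right: "\<And>c x y. scl c (x * y) = x * scl c y"
    and phi_linear: "Vector_Spaces.linear scl (*) phi"
    and phi_unital: "phi 1 = 1"

locale exch_system =
  A: nc_prob_space sclA phi + U: nc_prob_space sclU phiU
  for sclA :: "complex \<Rightarrow> 'a::ring_1 \<Rightarrow> 'a" and phi :: "'a \<Rightarrow> complex"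
    and sclU :: "complex \<Rightarrow> 'u::ring_1 \<Rightarrow> 'u" and phiU :: "'u \<Rightarrow> complex" +
  fixes iota :: "nat \<Rightarrow> 'a \<Rightarrow> 'u"
  assumes iota_inj: "\<And>k. inj (iota k)"
    and iota_linear: "\<And>k. Vector_Spaces.linear sclA sclU (iota k)"
    and iota_mult: "\<And>k x y. iota k (x * y) = iota k x * iota k y"
    and iota_one: "\<And>k. iota k 1 = 1"
    and iota_phi: "\<And>k x. phiU (iota k x) = phi x"
    and exchangeable: "\<And>(Xs :: 'a list) (is :: nat list) (\<sigma> :: nat \<Rightarrow> nat).
        length is = length Xs \<Longrightarrow> bij \<sigma> \<Longrightarrow>
        phiU (prod_list (map2 (\<lambda>x i. iota i x) Xs is))
        = phiU (prod_list (map2 (\<lambda>x i. iota (\<sigma> i) x) Xs is))"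

definition partitions :: "nat \<Rightarrow> nat set set set" where
  "partitions n = {P. partition_on {..<n} P}"

definition refines :: "'b set set \<Rightarrow> 'b set set \<Rightarrow> bool" where
  "refines \<sigma> \<pi> \<longleftrightarrow> (\<forall>B\<in>\<sigma>. \<exists>C\<in>\<pi>. B \<subseteq> C)"

definition hat0 :: "nat \<Rightarrow> nat set set" where
  "hat0 m = (\<lambda>i. {i}) ` {..<m}"

definition hat1 :: "nat \<Rightarrow> nat set set" where
  "hat1 m = {{..<m}}"

definition join_part :: "nat \<Rightarrow> nat set set \<Rightarrow> nat set set \<Rightarrow> nat set set" where
  "join_part n \<sigma> \<pi> = (THE \<rho>. \<rho> \<in> partitions n \<and> refines \<sigma> \<rho> \<and> refines \<pi> \<rho> \<and>
     (\<forall>\<tau>\<in>partitions n. refines \<sigma> \<tau> \<and> refines \<pi> \<tau> \<longrightarrow> refines \<rho> \<tau>))"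

definition moebius_part :: "nat \<Rightarrow> nat set set \<Rightarrow> nat set set \<Rightarrow> int" where
  "moebius_part n = (THE f.
     (\<forall>\<sigma>\<in>partitions n. \<forall>\<pi>\<in>partitions n. refines \<sigma> \<pi> \<longrightarrow>
        (\<Sum>\<rho>\<in>{\<rho>\<in>partitions n. refines \<sigma> \<rho> \<and> refines \<rho> \<pi>}. f \<sigma> \<rho>)
          = (if \<sigma> = \<pi> then 1 else 0)) \<and>
     (\<forall>\<sigma> \<pi>. \<not> (\<sigma> \<in> partitions n \<and> \<pi> \<in> partitions n \<and> refines \<sigma> \<pi>) \<longrightarrow> f \<sigma> \<pi> = 0))"

text \<open>phi_\<pi>(Y_0,...,Y_{n-1}): position j gets the copy labelled by the least element of its
  block of \<pi>, so the kernel of the labelling is exactly \<pi>; by exchangeability the value does not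
  depend on this choice of labels.\<close>
definition phi_part :: "('u::ring_1 \<Rightarrow> complex) \<Rightarrow> (nat \<Rightarrow> 'a \<Rightarrow> 'u) \<Rightarrow> nat set set \<Rightarrow> 'a list \<Rightarrow> complex" where
  "phi_part phiU iota \<pi> Ys =
     phiU (prod_list (map (\<lambda>j. iota (Min (THE B. B \<in> \<pi> \<and> j \<in> B)) (Ys ! j)) [0..<length Ys]))"

definition cum_part :: "('u::ring_1 \<Rightarrow> complex) \<Rightarrow> (nat \<Rightarrow> 'a \<Rightarrow> 'u) \<Rightarrow> nat set set \<Rightarrow> 'a list \<Rightarrow> complex" where
  "cum_part phiU iota \<pi> Ys =
     (\<Sum>\<sigma>\<in>{\<sigma>\<in>partitions (length Ys). refines \<sigma> \<pi>}.
        phi_part phiU iota \<sigma> Ys * of_int (moebius_part (length Ys) \<sigma> \<pi>))"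

definition cum :: "('u::ring_1 \<Rightarrow> complex) \<Rightarrow> (nat \<Rightarrow> 'a \<Rightarrow> 'u) \<Rightarrow> 'a list \<Rightarrow> complex" where
  "cum phiU iota Ys = cum_part phiU iota (hat1 (length Ys)) Ys"

text \<open>Pair (i,j) with i < m, j < n_i (0-based) is identified with position offset i + j,
  i.e. lexicographic order.\<close>
definition offset :: "nat list \<Rightarrow> nat \<Rightarrow> nat" where
  "offset ns i = (\<Sum>k<i. ns ! k)"

definition tilde :: "nat list \<Rightarrow> nat set set \<Rightarrow> nat set set" where
  "tilde ns \<pi> = (\<lambda>B. {offset ns i + j | i j. i \<in> B \<and> j < ns ! i}) ` \<pi>"

definition indecomposable :: "nat list \<Rightarrow> nat set set \<Rightarrow> bool" where
  "indecomposable ns \<sigma> \<longleftrightarrow>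
     join_part (sum_list ns) \<sigma> (tilde ns (hat0 (length ns))) = tilde ns (hat1 (length ns))"

end

theory Submission
  imports Defs
begin

(* Write pi~ for the partition of the n positions induced by a partition pi of the m rows, and
   collapse(sigma) for the partition of the rows with collapse(sigma)~ = sigma join 0~.  Since
   every partition above 0~ is of the form rho~, collapse is a lower adjoint of pi |-> pi~:
   collapse(sigma) <= pi iff sigma <= pi~.  Grouping the cumulants K_sigma(X) by the value of
   collapse(sigma) therefore gives, for every pi,
     sum_{rho <= pi} sum_{collapse(sigma) = rho} K_sigma(X) = sum_{sigma <= pi~} K_sigma(X)
       = phi_{pi~}(X) = phi_pi(Y) = sum_{rho <= pi} K_rho(Y),
   where Y_i is the product of the i-th row and the middle equality is exchangeability: labelling
   all entries of row i by the same copy turns the row into one factor.  The zeta transform of a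
   finite poset is injective, so K_pi(Y) = sum_{collapse(sigma) = pi} K_sigma(X); for pi = 1_m the
   condition collapse(sigma) = 1_m is indecomposability. *)

section \<open>Moebius functions of finite posets\<close>

locale finite_poset =
  fixes S :: "'b set" and le :: "'b \<Rightarrow> 'b \<Rightarrow> bool" (infix "\<preceq>" 50)
  assumes finite_carrier: "finite S"
    and le_refl: "x \<in> S \<Longrightarrow> x \<preceq> x"
    and le_trans: "\<lbrakk>x \<preceq> y; y \<preceq> z; x \<in> S; y \<in> S; z \<in> S\<rbrakk> \<Longrightarrow> x \<preceq> z"
    and le_antisym: "\<lbrakk>x \<preceq> y; y \<preceq> x; x \<in> S; y \<in> S\<rbrakk> \<Longrightarrow> x = y"
begin

definition interval :: "'b \<Rightarrow> 'b \<Rightarrow> 'b set" where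
  "interval s p = {r \<in> S. s \<preceq> r \<and> r \<preceq> p}"

definition is_moebius :: "('b \<Rightarrow> 'b \<Rightarrow> int) \<Rightarrow> bool" where
  "is_moebius f \<longleftrightarrow>
     (\<forall>s\<in>S. \<forall>p\<in>S. s \<preceq> p \<longrightarrow> (\<Sum>r\<in>interval s p. f s r) = (if s = p then 1 else 0))"

lemma finite_interval: "finite (interval s p)"
  using finite_carrier by (simp add: interval_def)

lemma ends_in_interval: "\<lbrakk>s \<in> S; p \<in> S; s \<preceq> p\<rbrakk> \<Longrightarrow> s \<in> interval s p \<and> p \<in> interval s p"
  by (simp add: interval_def le_refl)

lemma card_interval_less:
  assumes "r \<in> interval s p" "r \<noteq> p" "s \<in> S" "p \<in> S"
  shows "card (interval s r) < card (interval s p)"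
proof (rule psubset_card_mono[OF finite_interval])
  have "interval s r \<subseteq> interval s p"
    using assms unfolding interval_def by (blast intro: le_trans)
  moreover have "p \<notin> interval s r"
    using assms unfolding interval_def by (blast dest: le_antisym)
  moreover have "p \<in> interval s p"
    using assms unfolding interval_def by (blast intro: le_trans le_refl)
  ultimately show "interval s r \<subset> interval s p" by blast
qed

lemma sum_below_eqD:
  fixes a b :: "'b \<Rightarrow> 'c::cancel_comm_monoid_add"
  assumes eq: "\<forall>q\<in>S. (\<Sum>s\<in>{s\<in>S. s \<preceq> q}. a s) = (\<Sum>s\<in>{s\<in>S. s \<preceq> q}. b s)"
    and "p \<in> S"
  shows "a p = b p"
  using \<open>p \<in> S\<close>
proof (induction "card {s\<in>S. s \<preceq> p}" arbitrary: p rule: less_induct)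
  case less
  let ?L = "{s\<in>S. s \<preceq> p}"
  have fin: "finite ?L" using finite_carrier by simp
  have "p \<in> ?L" using less.prems le_refl by simp
  then have split: "(\<Sum>s\<in>?L. f s) = f p + (\<Sum>s\<in>?L - {p}. f s)" for f :: "'b \<Rightarrow> 'c"
    using fin by (simp add: sum.remove)
  have "a s = b s" if s: "s \<in> ?L - {p}" for s
  proof (rule less.hyps)
    have "{t\<in>S. t \<preceq> s} \<subseteq> ?L - {p}"
      using s less.prems by (blast intro: le_trans dest: le_antisym)
    then show "card {t\<in>S. t \<preceq> s} < card ?L"
      using fin \<open>p \<in> ?L\<close> by (meson card_Diff1_less card_mono le_less_trans finite_Diff)
  qed (use s in auto)
  then have "(\<Sum>s\<in>?L - {p}. a s) = (\<Sum>s\<in>?L - {p}. b s)"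
    by (rule sum.cong[OF refl])
  then show ?case
    using eq less.prems split[of a] split[of b] by simp
qed

lemma moebius_unique:
  assumes "is_moebius f" "is_moebius g" "s \<in> S" "p \<in> S" "s \<preceq> p"
  shows "f s p = g s p"
proof -
  interpret above: finite_poset "{r\<in>S. s \<preceq> r}" le
  proof unfold_locales
    show "finite {r\<in>S. s \<preceq> r}" using finite_carrier by simp
  qed (auto intro: le_refl elim: le_trans le_antisym)
  have "{t\<in>{r\<in>S. s \<preceq> r}. t \<preceq> q} = interval s q" for q
    by (auto simp: interval_def)
  then show ?thesis
    using assms by (intro above.sum_below_eqD[of "f s" "g s"]) (auto simp: is_moebius_def)
qed

text \<open>The recursion \<open>\<mu>(s,p) = - (\<Sum>s \<preceq> r \<prec> p. \<mu>(s,r))\<close> descends to proper subintervals; it is run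
  on a fuel argument instead, and \<open>card S\<close> units of fuel always suffice.\<close>

fun moebius_fuel :: "nat \<Rightarrow> 'b \<Rightarrow> 'b \<Rightarrow> int" where
  "moebius_fuel 0 s p = 0"
| "moebius_fuel (Suc k) s p =
     (if s = p then 1 else - (\<Sum>r\<in>interval s p - {p}. moebius_fuel k s r))"

lemma moebius_fuel_stable:
  assumes "card (interval s p) \<le> k" "s \<in> S" "p \<in> S" "s \<preceq> p"
  shows "moebius_fuel (Suc k) s p = moebius_fuel k s p"
  using assms(1,3,4)
proof (induction k arbitrary: p)
  case 0
  then show ?case
    using ends_in_interval[OF \<open>s \<in> S\<close>] finite_interval by (fastforce simp: card_eq_0_iff)
next
  case (Suc k)
  have "moebius_fuel (Suc k) s r = moebius_fuel k s r" if r: "r \<in> interval s p - {p}" for r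
  proof (rule Suc.IH)
    show "card (interval s r) \<le> k"
      using card_interval_less[of r s p] r Suc.prems \<open>s \<in> S\<close> by simp
  qed (use r in \<open>auto simp: interval_def\<close>)
  then show ?case by simp
qed

definition moebius :: "'b \<Rightarrow> 'b \<Rightarrow> int" where
  "moebius s p = (if s \<in> S \<and> p \<in> S \<and> s \<preceq> p then moebius_fuel (card S) s p else 0)"

lemma is_moebius_moebius: "is_moebius moebius"
  unfolding is_moebius_def
proof (intro ballI impI)
  fix s p assume sp: "s \<in> S" "p \<in> S" "s \<preceq> p"
  have card_le: "card (interval s p) \<le> card S"
    using finite_carrier by (auto simp: interval_def intro: card_mono)
  have fuel_enough: "moebius_fuel (card S) s p = moebius_fuel (Suc (card S)) s p"
    using moebius_fuel_stable[OF card_le sp] by simp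
  have "moebius s r = moebius_fuel (card S) s r" if "r \<in> interval s p" for r
    using that sp by (auto simp: moebius_def interval_def)
  then have "(\<Sum>r\<in>interval s p. moebius s r) = (\<Sum>r\<in>interval s p. moebius_fuel (card S) s r)"
    by (rule sum.cong[OF refl])
  also have "\<dots> = moebius_fuel (card S) s p + (\<Sum>r\<in>interval s p - {p}. moebius_fuel (card S) s r)"
    using ends_in_interval[OF sp] finite_interval by (simp add: sum.remove)
  also have "\<dots> = (if s = p then 1 else 0)"
  proof (cases "s = p")
    case True
    then have "interval s p = {p}"
      using sp le_antisym by (auto simp: interval_def le_refl)
    then show ?thesis using fuel_enough True by simp
  qed (use fuel_enough in simp)
  finally show "(\<Sum>r\<in>interval s p. moebius s r) = (if s = p then 1 else 0)" .
qed

lemma moebius_inversion: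
  fixes \<phi> :: "'b \<Rightarrow> 'c::comm_ring_1"
  assumes M: "is_moebius M" and p: "p \<in> S"
  shows "(\<Sum>s\<in>{s\<in>S. s \<preceq> p}. \<Sum>t\<in>{t\<in>S. t \<preceq> s}. \<phi> t * of_int (M t s)) = \<phi> p"
proof -
  let ?L = "{s\<in>S. s \<preceq> p}"
  have fin: "finite ?L" using finite_carrier by simp
  have "{t\<in>S. t \<preceq> s} = {t\<in>?L. t \<preceq> s}" if "s \<in> ?L" for s
    using that p le_trans by blast
  then have "(\<Sum>s\<in>?L. \<Sum>t\<in>{t\<in>S. t \<preceq> s}. \<phi> t * of_int (M t s))
      = (\<Sum>s\<in>?L. \<Sum>t\<in>{t\<in>?L. t \<preceq> s}. \<phi> t * of_int (M t s))"
    by (intro sum.cong) simp_all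
  also have "\<dots> = (\<Sum>t\<in>?L. \<Sum>s\<in>{s\<in>?L. t \<preceq> s}. \<phi> t * of_int (M t s))"
    using sum.swap_restrict[OF fin fin, of "\<lambda>s t. \<phi> t * of_int (M t s)" "\<lambda>s t. t \<preceq> s"] by simp
  also have "\<dots> = (\<Sum>t\<in>?L. \<phi> t * of_int (\<Sum>s\<in>interval t p. M t s))"
  proof (rule sum.cong[OF refl])
    fix t assume "t \<in> ?L"
    have "{s\<in>?L. t \<preceq> s} = interval t p" by (auto simp: interval_def)
    then show "(\<Sum>s\<in>{s\<in>?L. t \<preceq> s}. \<phi> t * of_int (M t s)) = \<phi> t * of_int (\<Sum>s\<in>interval t p. M t s)"
      by (simp add: sum_distrib_left)
  qed
  also have "\<dots> = (\<Sum>t\<in>?L. if t = p then \<phi> t else 0)"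
    using M p by (intro sum.cong[OF refl]) (auto simp: is_moebius_def)
  also have "\<dots> = \<phi> p"
    using fin p le_refl by (simp add: sum.delta')
  finally show ?thesis .
qed

end

section \<open>The partition lattice\<close>

lemma Disjoint_Sets_refines_iff:
  "Disjoint_Sets.refines A P Q \<longleftrightarrow> partition_on A P \<and> partition_on A Q \<and> refines P Q"
  by (simp add: Disjoint_Sets.refines_def Defs.refines_def)

lemma refines_antisym:
  "\<lbrakk>partition_on A P; partition_on A Q; refines P Q; refines Q P\<rbrakk> \<Longrightarrow> P = Q"
  using refines_asym by (auto simp: Disjoint_Sets_refines_iff)

lemma refines_refl: "refines P P"
  by (auto simp: refines_def)

lemma refines_trans: "refines P Q \<Longrightarrow> refines Q R \<Longrightarrow> refines P R"
  unfolding refines_def by (meson order_trans)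

lemma finite_poset_partitions: "finite_poset (partitions n) refines"
proof unfold_locales
  show "finite (partitions n)"
    by (simp add: partitions_def finitely_many_partition_on)
  show "refines x x" for x
    by (rule refines_refl)
  show "refines x z" if "refines x y" "refines y z" for x y z
    using that by (rule refines_trans)
  show "x = y" if "refines x y" "refines y x" "x \<in> partitions n" "y \<in> partitions n" for x y
    using that refines_antisym unfolding partitions_def by blast
qed

lemma moebius_part_eq: "moebius_part n = finite_poset.moebius (partitions n) refines"
proof -
  interpret finite_poset "partitions n" refines by (rule finite_poset_partitions)
  have moebius_iff: "(\<forall>\<sigma>\<in>partitions n. \<forall>\<pi>\<in>partitions n. refines \<sigma> \<pi> \<longrightarrow>
        (\<Sum>\<rho>\<in>{\<rho>\<in>partitions n. refines \<sigma> \<rho> \<and> refines \<rho> \<pi>}. f \<sigma> \<rho>) = (if \<sigma> = \<pi> then 1 else 0))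
      \<longleftrightarrow> is_moebius f" for f
    by (simp add: is_moebius_def interval_def)
  show ?thesis
    unfolding moebius_part_def moebius_iff
  proof (rule the_equality)
    fix f assume "is_moebius f \<and>
      (\<forall>\<sigma> \<pi>. \<not> (\<sigma> \<in> partitions n \<and> \<pi> \<in> partitions n \<and> refines \<sigma> \<pi>) \<longrightarrow> f \<sigma> \<pi> = 0)"
    then show "f = moebius"
      using moebius_unique[OF _ is_moebius_moebius] by (fastforce simp: moebius_def)
  qed (simp add: is_moebius_moebius moebius_def)
qed

lemma moment_cumulant_formula:
  assumes "\<pi> \<in> partitions (length Ys)"
  shows "(\<Sum>\<sigma>\<in>{\<sigma>\<in>partitions (length Ys). refines \<sigma> \<pi>}. cum_part phiU iota \<sigma> Ys)
       = phi_part phiU iota \<pi> Ys"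
proof -
  interpret finite_poset "partitions (length Ys)" refines by (rule finite_poset_partitions)
  show ?thesis
    unfolding cum_part_def moebius_part_eq
    by (rule moebius_inversion[OF is_moebius_moebius assms])
qed

lemma hat0_in_partitions: "hat0 m \<in> partitions m"
  by (simp add: hat0_def partitions_def partition_on_singletons)

lemma hat1_in_partitions: "m \<noteq> 0 \<Longrightarrow> hat1 m \<in> partitions m"
  by (simp add: hat1_def partitions_def partition_on_space lessThan_empty_iff)

lemma hat0_refines:
  assumes "p \<in> partitions m"
  shows "refines (hat0 m) p"
  unfolding refines_def hat0_def
proof
  fix B assume "B \<in> (\<lambda>i. {i}) ` {..<m}"
  then obtain i where "B = {i}" "i \<in> {..<m}" by blast
  then show "\<exists>C\<in>p. B \<subseteq> C"
    using assms partition_onD1 unfolding partitions_def by blast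
qed

lemma partition_on_trivial: "partition_on A ({A} - {{}})"
proof (cases "A = {}")
  case False
  then have "{A} - {{}} = {A}" by auto
  then show ?thesis using partition_on_space[OF False] by simp
qed (simp add: partition_on_empty)

lemma refines_trivial:
  assumes "partition_on A P"
  shows "refines P ({A} - {{}})"
  unfolding refines_def
proof
  fix B assume "B \<in> P"
  then have "B \<subseteq> A" "B \<noteq> {}"
    using assms partition_onD1 partition_onD3 by blast+
  then show "\<exists>C\<in>{A} - {{}}. B \<subseteq> C" by auto
qed

lemma ex_least_common_coarsening:
  assumes "partition_on A \<sigma>" "partition_on A \<pi>"
  shows "\<exists>\<rho>. partition_on A \<rho> \<and> refines \<sigma> \<rho> \<and> refines \<pi> \<rho> \<and>
    (\<forall>\<tau>. partition_on A \<tau> \<and> refines \<sigma> \<tau> \<and> refines \<pi> \<tau> \<longrightarrow> refines \<rho> \<tau>)"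
proof -
  let ?U = "{\<tau>. partition_on A \<tau> \<and> refines \<sigma> \<tau> \<and> refines \<pi> \<tau>}"
  have U: "partition_on A \<tau>" if "\<tau> \<in> ?U" for \<tau>
    using that by simp
  have "{A} - {{}} \<in> ?U"
    using assms partition_on_trivial refines_trivial by blast
  then have "?U \<noteq> {}" by blast
  let ?J = "common_refinement ?U"
  have "partition_on A ?J"
    using partition_on_common_refinement[OF U \<open>?U \<noteq> {}\<close>] .
  moreover have "refines \<sigma> ?J" "refines \<pi> ?J"
    using common_refinement_coarsest[OF U _ _ \<open>?U \<noteq> {}\<close>] assms
    by (simp_all add: Disjoint_Sets_refines_iff)
  moreover have "refines ?J \<tau>" if "\<tau> \<in> ?U" for \<tau>
    using refines_common_refinement[OF U that] by (simp add: Disjoint_Sets_refines_iff)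
  ultimately show ?thesis by blast
qed

lemma join_part_lub:
  assumes "\<sigma> \<in> partitions n" "\<pi> \<in> partitions n"
  shows "join_part n \<sigma> \<pi> \<in> partitions n \<and> refines \<sigma> (join_part n \<sigma> \<pi>) \<and> refines \<pi> (join_part n \<sigma> \<pi>) \<and>
    (\<forall>\<tau>\<in>partitions n. refines \<sigma> \<tau> \<and> refines \<pi> \<tau> \<longrightarrow> refines (join_part n \<sigma> \<pi>) \<tau>)"
  unfolding join_part_def
proof (rule theI')
  obtain \<rho> where \<rho>: "partition_on {..<n} \<rho>" "refines \<sigma> \<rho>" "refines \<pi> \<rho>"
    "\<And>\<tau>. \<lbrakk>partition_on {..<n} \<tau>; refines \<sigma> \<tau>; refines \<pi> \<tau>\<rbrakk> \<Longrightarrow> refines \<rho> \<tau>"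
    using ex_least_common_coarsening assms unfolding partitions_def by blast
  show "\<exists>!\<rho>. \<rho> \<in> partitions n \<and> refines \<sigma> \<rho> \<and> refines \<pi> \<rho> \<and>
      (\<forall>\<tau>\<in>partitions n. refines \<sigma> \<tau> \<and> refines \<pi> \<tau> \<longrightarrow> refines \<rho> \<tau>)"
  proof (rule ex1I[of _ \<rho>])
    fix \<rho>' assume \<rho>': "\<rho>' \<in> partitions n \<and> refines \<sigma> \<rho>' \<and> refines \<pi> \<rho>' \<and>
      (\<forall>\<tau>\<in>partitions n. refines \<sigma> \<tau> \<and> refines \<pi> \<tau> \<longrightarrow> refines \<rho>' \<tau>)"
    show "\<rho>' = \<rho>"
      by (rule refines_antisym[of "{..<n}"]) (use \<rho> \<rho>' in \<open>simp_all add: partitions_def\<close>)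
  qed (use \<rho> in \<open>simp add: partitions_def\<close>)
qed

section \<open>Pulling partitions back along a surjection\<close>

lemma partition_on_block_eq:
  "\<lbrakk>partition_on A P; B \<in> P; C \<in> P; x \<in> B; x \<in> C\<rbrakk> \<Longrightarrow> B = C"
  using partition_onD2 disjointD by fastforce

definition pullback :: "('a \<Rightarrow> 'b) \<Rightarrow> 'a set \<Rightarrow> 'b set set \<Rightarrow> 'a set set" where
  "pullback r A P = (\<lambda>C. A \<inter> r -` C) ` P"

lemma partition_on_pullback:
  assumes P: "partition_on B P" and r: "r ` A = B"
  shows "partition_on A (pullback r A P)"
proof (rule partition_onI)
  show "\<Union>(pullback r A P) = A"
    using partition_onD1[OF P] r by (auto simp: pullback_def)
  show "disjnt p q" if pq: "p \<in> pullback r A P" "q \<in> pullback r A P" "p \<noteq> q" for p q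
  proof -
    obtain C D where "C \<in> P" "D \<in> P" "p = A \<inter> r -` C" "q = A \<inter> r -` D" "C \<noteq> D"
      using pq unfolding pullback_def by blast
    then show ?thesis
      using partition_on_block_eq[OF P] by (auto simp: disjnt_def)
  qed
  show "{} \<notin> pullback r A P"
  proof
    assume "{} \<in> pullback r A P"
    then obtain C where C: "C \<in> P" "A \<inter> r -` C = {}" by (auto simp: pullback_def)
    obtain c where "c \<in> C" using partition_onD3[OF P] C(1) by (metis equals0I)
    then have "c \<in> B" using partition_onD1[OF P] C(1) by blast
    then have "c \<in> r ` A" using r by simp
    then show False using C(2) \<open>c \<in> C\<close> by blast
  qed
qed

lemma refines_pullback_iff:
  assumes P: "partition_on B P" and r: "r ` A = B"
  shows "refines (pullback r A P) (pullback r A Q) \<longleftrightarrow> refines P Q"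
  unfolding refines_def
proof safe
  fix C assume pull: "\<forall>X\<in>pullback r A P. \<exists>Y\<in>pullback r A Q. X \<subseteq> Y" and "C \<in> P"
  then obtain D where D: "D \<in> Q" "A \<inter> r -` C \<subseteq> A \<inter> r -` D"
    by (auto simp: pullback_def)
  have "C \<subseteq> D"
  proof
    fix c assume "c \<in> C"
    then have "c \<in> B"
      using partition_onD1[OF P] \<open>C \<in> P\<close> by blast
    then have "c \<in> r ` A"
      using r by simp
    then obtain a where "a \<in> A" "r a = c" by blast
    then show "c \<in> D" using D(2) \<open>c \<in> C\<close> by blast
  qed
  then show "\<exists>D\<in>Q. C \<subseteq> D" using D(1) by blast
next
  fix X assume PQ: "\<forall>C\<in>P. \<exists>D\<in>Q. C \<subseteq> D" and "X \<in> pullback r A P"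
  obtain C where C: "C \<in> P" "X = A \<inter> r -` C"
    using \<open>X \<in> pullback r A P\<close> unfolding pullback_def by blast
  then obtain D where D: "D \<in> Q" "C \<subseteq> D"
    using PQ by blast
  have "A \<inter> r -` D \<in> pullback r A Q"
    unfolding pullback_def using D(1) by (rule imageI)
  moreover have "X \<subseteq> A \<inter> r -` D"
    using C(2) D(2) by auto
  ultimately show "\<exists>Y\<in>pullback r A Q. X \<subseteq> Y" ..
qed

lemma pullback_inj:
  assumes "partition_on B P" "partition_on B Q" "r ` A = B" "pullback r A P = pullback r A Q"
  shows "P = Q"
proof (rule refines_antisym[OF assms(1,2)])
  have "refines (pullback r A P) (pullback r A Q)" "refines (pullback r A Q) (pullback r A P)"
    using assms(4) by (auto simp: refines_def)
  then show "refines P Q" "refines Q P"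
    using refines_pullback_iff[OF assms(1,3), of Q] refines_pullback_iff[OF assms(2,3), of P] by simp_all
qed

lemma saturated_block_eq:
  assumes \<theta>: "partition_on A \<theta>" and r: "r ` A = B"
    and saturated: "refines (pullback r A ((\<lambda>b. {b}) ` B)) \<theta>" and T: "T \<in> \<theta>"
  shows "A \<inter> r -` (r ` T) = T"
proof
  show "T \<subseteq> A \<inter> r -` (r ` T)" using partition_onD1[OF \<theta>] T by blast
  show "A \<inter> r -` (r ` T) \<subseteq> T"
  proof
    fix x assume "x \<in> A \<inter> r -` (r ` T)"
    then obtain y where xy: "x \<in> A" "y \<in> T" "r x = r y" by blast
    have "y \<in> A" using partition_onD1[OF \<theta>] T xy(2) by blast
    then obtain T' where T': "T' \<in> \<theta>" "A \<inter> r -` {r y} \<subseteq> T'"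
      using saturated r by (auto simp: refines_def pullback_def)
    then have "x \<in> T'" "y \<in> T'" using xy \<open>y \<in> A\<close> by auto
    then show "x \<in> T" using partition_on_block_eq[OF \<theta> T'(1) T, of y] xy(2) by simp
  qed
qed

lemma saturated_partition_eq_pullback:
  assumes \<theta>: "partition_on A \<theta>" and r: "r ` A = B"
    and saturated: "refines (pullback r A ((\<lambda>b. {b}) ` B)) \<theta>"
  shows "partition_on B ((`) r ` \<theta>)" and "pullback r A ((`) r ` \<theta>) = \<theta>"
proof -
  note block = saturated_block_eq[OF assms]
  show "partition_on B ((`) r ` \<theta>)"
  proof (rule partition_onI)
    show "\<Union>((`) r ` \<theta>) = B" using partition_onD1[OF \<theta>] r by blast
    show "{} \<notin> (`) r ` \<theta>" using partition_onD3[OF \<theta>] by auto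
    fix p q assume "p \<in> (`) r ` \<theta>" "q \<in> (`) r ` \<theta>" "p \<noteq> q"
    then obtain T1 T2 where T: "T1 \<in> \<theta>" "T2 \<in> \<theta>" "p = r ` T1" "q = r ` T2" "T1 \<noteq> T2" by blast
    have "r ` T1 \<inter> r ` T2 = {}"
    proof (rule ccontr)
      assume "r ` T1 \<inter> r ` T2 \<noteq> {}"
      then obtain x where "x \<in> T1" "r x \<in> r ` T2" by blast
      moreover have "x \<in> A" using partition_onD1[OF \<theta>] T(1) \<open>x \<in> T1\<close> by blast
      ultimately have "x \<in> T2" using block[OF T(2)] by blast
      then show False using partition_on_block_eq[OF \<theta> T(1,2) \<open>x \<in> T1\<close>] T(5) by simp
    qed
    then show "disjnt p q" using T by (simp add: disjnt_def)
  qed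
  show "pullback r A ((`) r ` \<theta>) = \<theta>"
    using block by (simp add: pullback_def image_image)
qed

section \<open>Rows of a concatenation\<close>

lemma offset_Suc: "offset ns (Suc i) = offset ns i + ns ! i"
  by (simp add: offset_def)

lemma offset_mono: "i \<le> k \<Longrightarrow> offset ns i \<le> offset ns k"
  unfolding offset_def by (rule sum_mono2) auto

lemma offset_length: "offset ns (length ns) = sum_list ns"
  by (simp add: offset_def sum_list_sum_nth atLeast0LessThan)

definition row :: "nat list \<Rightarrow> nat \<Rightarrow> nat" where
  "row ns p = (LEAST i. p < offset ns (Suc i))"

definition col :: "nat list \<Rightarrow> nat \<Rightarrow> nat" where
  "col ns p = p - offset ns (row ns p)"

lemma row_eqI:
  assumes "offset ns i \<le> p" "p < offset ns (Suc i)"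
  shows "row ns p = i"
  unfolding row_def
proof (rule Least_equality)
  show "i \<le> i'" if "p < offset ns (Suc i')" for i'
    using that assms(1) offset_mono[of "Suc i'" i ns] by (cases "i \<le> i'") auto
qed (rule assms(2))

lemma row_col_offset:
  assumes "j < ns ! i"
  shows "row ns (offset ns i + j) = i" and "col ns (offset ns i + j) = j"
proof -
  show "row ns (offset ns i + j) = i"
    using assms by (intro row_eqI) (simp_all add: offset_Suc)
  then show "col ns (offset ns i + j) = j"
    by (simp add: col_def)
qed

lemma row_col_bounds:
  assumes "p < sum_list ns"
  shows "row ns p < length ns" and "col ns p < ns ! row ns p"
    and "p = offset ns (row ns p) + col ns p"
proof -
  let ?last = "length ns - 1"
  have "ns \<noteq> []" using assms by auto
  then have last: "p < offset ns (Suc ?last)"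
    using assms offset_length[of ns] by simp
  then have upper: "p < offset ns (Suc (row ns p))"
    unfolding row_def by (rule LeastI)
  have "row ns p \<le> ?last"
    unfolding row_def using last by (rule Least_le)
  moreover have "0 < length ns" using \<open>ns \<noteq> []\<close> by simp
  ultimately show "row ns p < length ns" by linarith
  have lower: "offset ns (row ns p) \<le> p"
  proof (cases "row ns p")
    case (Suc k)
    then have "\<not> p < offset ns (Suc k)"
      unfolding row_def by (metis lessI not_less_Least)
    then show ?thesis using Suc by simp
  qed (simp add: offset_def)
  show "col ns p < ns ! row ns p" "p = offset ns (row ns p) + col ns p"
    using lower upper by (simp_all add: col_def offset_Suc)
qed

lemma offset_less_sum_list:
  assumes "i < length ns" "j < ns ! i"
  shows "offset ns i + j < sum_list ns"
  using assms offset_mono[of "Suc i" "length ns" ns] by (simp add: offset_Suc offset_length)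

lemma row_image:
  assumes "\<forall>i<length ns. 1 \<le> ns ! i"
  shows "row ns ` {..<sum_list ns} = {..<length ns}"
proof
  show "row ns ` {..<sum_list ns} \<subseteq> {..<length ns}"
    using row_col_bounds(1) by blast
  show "{..<length ns} \<subseteq> row ns ` {..<sum_list ns}"
  proof
    fix i assume "i \<in> {..<length ns}"
    then have "0 < ns ! i" "i < length ns" using assms by auto
    then have "row ns (offset ns i + 0) = i" "offset ns i + 0 < sum_list ns"
      using row_col_offset(1) offset_less_sum_list by blast+
    then show "i \<in> row ns ` {..<sum_list ns}"
      by (metis image_eqI lessThan_iff)
  qed
qed

lemma tilde_eq_pullback:
  assumes "P \<in> partitions (length ns)"
  shows "tilde ns P = pullback (row ns) {..<sum_list ns} P"
  unfolding tilde_def pullback_def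
proof (rule image_cong[OF refl])
  fix C assume "C \<in> P"
  then have C: "C \<subseteq> {..<length ns}"
    using assms partition_onD1 unfolding partitions_def by blast
  show "{offset ns i + j |i j. i \<in> C \<and> j < ns ! i} = {..<sum_list ns} \<inter> row ns -` C"
  proof (intro equalityI subsetI)
    fix p assume "p \<in> {offset ns i + j |i j. i \<in> C \<and> j < ns ! i}"
    then obtain i j where "p = offset ns i + j" "i \<in> C" "j < ns ! i" by blast
    moreover have "i < length ns" using C \<open>i \<in> C\<close> by blast
    ultimately show "p \<in> {..<sum_list ns} \<inter> row ns -` C"
      by (simp add: offset_less_sum_list row_col_offset(1))
  next
    fix p assume "p \<in> {..<sum_list ns} \<inter> row ns -` C"
    then show "p \<in> {offset ns i + j |i j. i \<in> C \<and> j < ns ! i}"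
      using row_col_bounds(2,3) by blast
  qed
qed

lemma concat_eq_map_row_col:
  "concat (map (\<lambda>i. map (F i) [0..<ns ! i]) [0..<length ns])
     = map (\<lambda>p. F (row ns p) (col ns p)) [0..<sum_list ns]"
proof -
  have "concat (map (\<lambda>i. map (F i) [0..<ns ! i]) [0..<k])
      = map (\<lambda>p. F (row ns p) (col ns p)) [0..<offset ns k]" for k
  proof (induction k)
    case (Suc k)
    have "map (\<lambda>p. F (row ns p) (col ns p)) [offset ns k..<offset ns k + ns ! k] = map (F k) [0..<ns ! k]"
      by (rule nth_equalityI) (simp_all add: row_col_offset)
    then show ?case
      using Suc.IH by (simp add: offset_Suc upt_add_eq_append[of 0 "offset ns k"])
  qed (simp add: offset_def)
  from this[of "length ns"] show ?thesis
    by (simp add: offset_length)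
qed

lemma tilde_in_partitions:
  assumes "\<forall>i<length ns. 1 \<le> ns ! i" "P \<in> partitions (length ns)"
  shows "tilde ns P \<in> partitions (sum_list ns)"
  using partition_on_pullback[OF _ row_image[OF assms(1)]] assms(2)
  by (simp add: tilde_eq_pullback partitions_def)

section \<open>Collapsing partitions of positions to partitions of rows\<close>

text \<open>Every block of the join with \<open>tilde ns (hat0 (length ns))\<close> is a union of whole rows, so its image
  under \<open>row ns\<close> is a partition of the rows whose tilde is that join.\<close>

definition collapse :: "nat list \<Rightarrow> nat set set \<Rightarrow> nat set set" where
  "collapse ns \<sigma> = (`) (row ns) ` join_part (sum_list ns) \<sigma> (tilde ns (hat0 (length ns)))"

lemma collapse_in_partitions_and_tilde:
  assumes pos: "\<forall>i<length ns. 1 \<le> ns ! i" and \<sigma>: "\<sigma> \<in> partitions (sum_list ns)"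
  shows "collapse ns \<sigma> \<in> partitions (length ns)"
    and "tilde ns (collapse ns \<sigma>) = join_part (sum_list ns) \<sigma> (tilde ns (hat0 (length ns)))"
proof -
  let ?J = "join_part (sum_list ns) \<sigma> (tilde ns (hat0 (length ns)))"
  have J: "?J \<in> partitions (sum_list ns)" "refines (tilde ns (hat0 (length ns))) ?J"
    using join_part_lub[OF \<sigma> tilde_in_partitions[OF pos hat0_in_partitions]] by simp_all
  have "refines (pullback (row ns) {..<sum_list ns} ((\<lambda>i. {i}) ` {..<length ns})) ?J"
    using J(2) by (simp add: tilde_eq_pullback hat0_in_partitions) (simp add: hat0_def)
  note saturated = saturated_partition_eq_pullback[OF _ row_image[OF pos] this]
  show collapse: "collapse ns \<sigma> \<in> partitions (length ns)"
    using saturated(1) J(1) by (simp add: collapse_def partitions_def)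
  show "tilde ns (collapse ns \<sigma>) = ?J"
    unfolding tilde_eq_pullback[OF collapse]
    using saturated(2) J(1) by (simp add: collapse_def partitions_def)
qed

lemma refines_collapse_iff:
  assumes pos: "\<forall>i<length ns. 1 \<le> ns ! i" and \<sigma>: "\<sigma> \<in> partitions (sum_list ns)"
    and p: "p \<in> partitions (length ns)"
  shows "refines (collapse ns \<sigma>) p \<longleftrightarrow> refines \<sigma> (tilde ns p)"
proof -
  let ?K = "tilde ns (hat0 (length ns))"
  let ?J = "join_part (sum_list ns) \<sigma> ?K"
  have J: "refines \<sigma> ?J" "refines ?K ?J"
    "\<And>\<tau>. \<lbrakk>\<tau> \<in> partitions (sum_list ns); refines \<sigma> \<tau>; refines ?K \<tau>\<rbrakk> \<Longrightarrow> refines ?J \<tau>"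
    using join_part_lub[OF \<sigma> tilde_in_partitions[OF pos hat0_in_partitions]] by blast+
  have collapse: "collapse ns \<sigma> \<in> partitions (length ns)"
    by (rule collapse_in_partitions_and_tilde(1)[OF pos \<sigma>])
  have "refines (collapse ns \<sigma>) p \<longleftrightarrow> refines (tilde ns (collapse ns \<sigma>)) (tilde ns p)"
    using refines_pullback_iff[OF _ row_image[OF pos]] collapse p
    by (simp add: tilde_eq_pullback partitions_def)
  also have "\<dots> \<longleftrightarrow> refines ?J (tilde ns p)"
    by (simp add: collapse_in_partitions_and_tilde(2)[OF pos \<sigma>])
  also have "\<dots> \<longleftrightarrow> refines \<sigma> (tilde ns p)"
  proof -
    have "refines (hat0 (length ns)) p"
      using p by (rule hat0_refines)
    then have "refines ?K (tilde ns p)"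
      using refines_pullback_iff[OF _ row_image[OF pos]] p hat0_in_partitions
      by (simp add: tilde_eq_pullback partitions_def)
    then show ?thesis
      using J refines_trans tilde_in_partitions[OF pos p] by blast
  qed
  finally show ?thesis .
qed

lemma indecomposable_iff_collapse:
  assumes pos: "\<forall>i<length ns. 1 \<le> ns ! i" and "ns \<noteq> []" and \<sigma>: "\<sigma> \<in> partitions (sum_list ns)"
  shows "indecomposable ns \<sigma> \<longleftrightarrow> collapse ns \<sigma> = hat1 (length ns)"
proof -
  have hat1: "hat1 (length ns) \<in> partitions (length ns)"
    using \<open>ns \<noteq> []\<close> by (simp add: hat1_in_partitions)
  have collapse: "collapse ns \<sigma> \<in> partitions (length ns)"
    by (rule collapse_in_partitions_and_tilde(1)[OF pos \<sigma>])
  have "indecomposable ns \<sigma> \<longleftrightarrow> tilde ns (collapse ns \<sigma>) = tilde ns (hat1 (length ns))"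
    by (simp add: indecomposable_def collapse_in_partitions_and_tilde(2)[OF pos \<sigma>])
  also have "\<dots> \<longleftrightarrow> collapse ns \<sigma> = hat1 (length ns)"
    using pullback_inj[OF _ _ row_image[OF pos]] collapse hat1
    by (auto simp: tilde_eq_pullback partitions_def)
  finally show ?thesis .
qed

lemma sum_collapse_fibres_below:
  assumes pos: "\<forall>i<length ns. 1 \<le> ns ! i" and q: "q \<in> partitions (length ns)"
  shows "(\<Sum>s\<in>{s\<in>partitions (length ns). refines s q}.
            \<Sum>\<sigma>\<in>{\<sigma>\<in>partitions (sum_list ns). collapse ns \<sigma> = s}. h \<sigma>)
       = (\<Sum>\<sigma>\<in>{\<sigma>\<in>partitions (sum_list ns). refines \<sigma> (tilde ns q)}. h \<sigma>)"
proof -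
  let ?below = "{s\<in>partitions (length ns). refines s q}"
  let ?S = "{\<sigma>\<in>partitions (sum_list ns). refines (collapse ns \<sigma>) q}"
  have fin: "finite ?S" "finite ?below"
    using finite_poset.finite_carrier[OF finite_poset_partitions] by simp_all
  have "(\<Sum>s\<in>?below. \<Sum>\<sigma>\<in>{\<sigma>\<in>partitions (sum_list ns). collapse ns \<sigma> = s}. h \<sigma>)
      = (\<Sum>s\<in>?below. \<Sum>\<sigma>\<in>{\<sigma>\<in>?S. collapse ns \<sigma> = s}. h \<sigma>)"
    by (intro sum.cong refl) auto
  also have "\<dots> = (\<Sum>\<sigma>\<in>?S. h \<sigma>)"
    by (rule sum.group[OF fin]) (auto intro: collapse_in_partitions_and_tilde(1)[OF pos])
  also have "?S = {\<sigma>\<in>partitions (sum_list ns). refines \<sigma> (tilde ns q)}"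
    using refines_collapse_iff[OF pos _ q] by auto
  finally show ?thesis .
qed

section \<open>Mixed moments under exchangeability\<close>

lemma inj_on_extends_to_bij:
  fixes f :: "'a \<Rightarrow> 'a"
  assumes "finite D" "inj_on f D"
  obtains \<sigma> where "bij \<sigma>" "\<And>x. x \<in> D \<Longrightarrow> \<sigma> x = f x"
proof -
  let ?E = "D \<union> f ` D"
  have fin: "finite ?E" using assms(1) by simp
  have "card (?E - D) = card (?E - f ` D)"
    using assms by (simp add: card_Diff_subset card_image)
  with finite_same_card_bij[OF finite_Diff[OF fin] finite_Diff[OF fin]]
  obtain g where g: "bij_betw g (?E - D) (?E - f ` D)" by blast
  let ?h = "\<lambda>x. if x \<in> D then f x else g x"
  have "bij_betw ?h (D \<union> (?E - D)) (f ` D \<union> (?E - f ` D))"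
    by (rule bij_betw_disjoint_Un[OF inj_on_imp_bij_betw[OF assms(2)] g]) simp_all
  moreover have "D \<union> (?E - D) = ?E" "f ` D \<union> (?E - f ` D) = ?E" by auto
  ultimately have "bij_betw ?h ?E ?E" by simp
  then have "bij_betw (\<lambda>x. if x \<in> ?E then ?h x else id x) (?E \<union> - ?E) (?E \<union> - ?E)"
    by (rule bij_betw_disjoint_Un[OF _ bij_betw_id]) blast+
  then have "bij (\<lambda>x. if x \<in> ?E then ?h x else id x)"
    unfolding Compl_partition .
  then show thesis
    by (rule that) simp
qed

lemma prod_list_concat: "prod_list (concat xss) = prod_list (map prod_list xss)"
  by (induction xss) simp_all

lemma the_block_eq: "\<lbrakk>partition_on A P; B \<in> P; x \<in> B\<rbrakk> \<Longrightarrow> (THE B. B \<in> P \<and> x \<in> B) = B"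
  by (rule the_equality) (auto dest: partition_on_block_eq)

lemma Min_block_eq_iff:
  assumes P: "partition_on A P" and "finite A" "x \<in> A" "y \<in> A"
  shows "Min (THE B. B \<in> P \<and> x \<in> B) = Min (THE B. B \<in> P \<and> y \<in> B) \<longleftrightarrow> (\<exists>B\<in>P. x \<in> B \<and> y \<in> B)"
proof -
  obtain Bx By where B: "Bx \<in> P" "x \<in> Bx" "By \<in> P" "y \<in> By"
    using partition_onD1[OF P] \<open>x \<in> A\<close> \<open>y \<in> A\<close> by blast
  have fin: "finite Bx" "finite By"
    using B partition_onD1[OF P] \<open>finite A\<close> by (meson Union_upper finite_subset)+
  have "Min Bx = Min By \<longleftrightarrow> Bx = By"
  proof
    assume "Min Bx = Min By"
    then have "Min Bx \<in> Bx" "Min Bx \<in> By"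
      using B fin by (metis Min_in empty_iff)+
    then show "Bx = By"
      using partition_on_block_eq[OF P B(1,3)] by blast
  qed simp
  also have "\<dots> \<longleftrightarrow> (\<exists>B\<in>P. x \<in> B \<and> y \<in> B)"
    using B partition_on_block_eq[OF P] by blast
  finally show ?thesis
    using B the_block_eq[OF P] by simp
qed

context exch_system
begin

lemma iota_prod_list: "iota k (prod_list xs) = prod_list (map (iota k) xs)"
  by (induction xs) (simp_all add: iota_mult iota_one)

lemma phiU_relabel:
  assumes same_kernel: "\<forall>p<length Xs. \<forall>q<length Xs. lab p = lab q \<longleftrightarrow> lab' p = lab' q"
  shows "phiU (prod_list (map (\<lambda>j. iota (lab j) (Xs ! j)) [0..<length Xs]))
       = phiU (prod_list (map (\<lambda>j. iota (lab' j) (Xs ! j)) [0..<length Xs]))"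
proof -
  let ?J = "{..<length Xs}"
  define f where "f x = lab' (inv_into ?J lab x)" for x
  have f: "f (lab j) = lab' j" if "j < length Xs" for j
  proof -
    have lab_j: "lab j \<in> lab ` ?J" using that by simp
    have "inv_into ?J lab (lab j) < length Xs" "lab (inv_into ?J lab (lab j)) = lab j"
      using inv_into_into[OF lab_j] f_inv_into_f[OF lab_j] by simp_all
    then show ?thesis
      using same_kernel that by (simp add: f_def)
  qed
  have "inj_on f (lab ` ?J)"
    using f same_kernel by (auto simp: inj_on_def)
  then obtain \<sigma> where \<sigma>: "bij \<sigma>" "\<And>x. x \<in> lab ` ?J \<Longrightarrow> \<sigma> x = f x"
    using inj_on_extends_to_bij by blast
  have labelled: "map2 (\<lambda>x i. h i x) Xs (map l [0..<length Xs])
      = map (\<lambda>j. h (l j) (Xs ! j)) [0..<length Xs]" for h :: "nat \<Rightarrow> 'a \<Rightarrow> 'u" and l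
    by (subst map_nth[symmetric]) (simp add: map2_map_map)
  have "phiU (prod_list (map (\<lambda>j. iota (lab j) (Xs ! j)) [0..<length Xs]))
      = phiU (prod_list (map2 (\<lambda>x i. iota i x) Xs (map lab [0..<length Xs])))"
    by (simp only: labelled)
  also have "\<dots> = phiU (prod_list (map2 (\<lambda>x i. iota (\<sigma> i) x) Xs (map lab [0..<length Xs])))"
    by (rule exchangeable) (simp_all add: \<sigma>(1))
  also have "\<dots> = phiU (prod_list (map (\<lambda>j. iota (\<sigma> (lab j)) (Xs ! j)) [0..<length Xs]))"
    by (simp only: labelled)
  also have "map (\<lambda>j. iota (\<sigma> (lab j)) (Xs ! j)) [0..<length Xs]
      = map (\<lambda>j. iota (lab' j) (Xs ! j)) [0..<length Xs]"
    using \<sigma>(2) f by (intro map_cong) auto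
  finally show ?thesis .
qed

lemma phi_part_eq_labels:
  assumes "partition_on {..<length Ys} \<pi>"
    and "\<forall>p<length Ys. \<forall>q<length Ys. lab p = lab q \<longleftrightarrow> (\<exists>B\<in>\<pi>. p \<in> B \<and> q \<in> B)"
  shows "phi_part phiU iota \<pi> Ys = phiU (prod_list (map (\<lambda>j. iota (lab j) (Ys ! j)) [0..<length Ys]))"
  unfolding phi_part_def
  by (rule phiU_relabel) (use Min_block_eq_iff[OF assms(1)] assms(2) in auto)

lemma phi_part_tilde:
  assumes pos: "\<forall>i<length ns. 1 \<le> ns ! i" and P: "P \<in> partitions (length ns)"
  shows "phi_part phiU iota (tilde ns P) (concat (map (\<lambda>i. map (X i) [0..<ns ! i]) [0..<length ns]))
       = phi_part phiU iota P (map (\<lambda>i. prod_list (map (X i) [0..<ns ! i])) [0..<length ns])"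
    (is "phi_part phiU iota _ ?Xs = phi_part phiU iota _ ?Ys")
proof -
  define lab where "lab i = Min (THE B. B \<in> P \<and> i \<in> B)" for i
  have Xs: "?Xs = map (\<lambda>p. X (row ns p) (col ns p)) [0..<sum_list ns]"
    by (rule concat_eq_map_row_col)
  have P_part: "partition_on {..<length ns} P"
    using P by (simp add: partitions_def)
  have "phi_part phiU iota (tilde ns P) ?Xs
      = phiU (prod_list (map (\<lambda>p. iota (lab (row ns p)) (?Xs ! p)) [0..<length ?Xs]))"
  proof (rule phi_part_eq_labels)
    show "partition_on {..<length ?Xs} (tilde ns P)"
      using tilde_in_partitions[OF pos P] by (simp add: Xs partitions_def)
    have "lab (row ns p) = lab (row ns q) \<longleftrightarrow> (\<exists>B\<in>tilde ns P. p \<in> B \<and> q \<in> B)"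
      if "p < sum_list ns" "q < sum_list ns" for p q
      using Min_block_eq_iff[OF P_part finite_lessThan, of "row ns p" "row ns q"]
        row_col_bounds(1)[OF that(1)] row_col_bounds(1)[OF that(2)] that
      by (auto simp: lab_def tilde_eq_pullback[OF P] pullback_def)
    then show "\<forall>p<length ?Xs. \<forall>q<length ?Xs.
        lab (row ns p) = lab (row ns q) \<longleftrightarrow> (\<exists>B\<in>tilde ns P. p \<in> B \<and> q \<in> B)"
      by (simp add: Xs)
  qed
  also have "map (\<lambda>p. iota (lab (row ns p)) (?Xs ! p)) [0..<length ?Xs]
      = concat (map (\<lambda>i. map (\<lambda>j. iota (lab i) (X i j)) [0..<ns ! i]) [0..<length ns])"
    by (simp add: Xs concat_eq_map_row_col)
  also have "prod_list \<dots> = prod_list (map (\<lambda>i. iota (lab i) (prod_list (map (X i) [0..<ns ! i]))) [0..<length ns])"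
    by (simp add: prod_list_concat iota_prod_list comp_def)
  also have "map (\<lambda>i. iota (lab i) (prod_list (map (X i) [0..<ns ! i]))) [0..<length ns]
      = map (\<lambda>i. iota (lab i) (?Ys ! i)) [0..<length ?Ys]"
    by (rule map_cong) simp_all
  also have "phiU (prod_list \<dots>) = phi_part phiU iota P ?Ys"
    unfolding phi_part_def lab_def ..
  finally show ?thesis .
qed

lemma cum_part_products_eq_sum_collapse:
  assumes pos: "\<forall>i<length ns. 1 \<le> ns ! i" and p: "p \<in> partitions (length ns)"
  shows "cum_part phiU iota p (map (\<lambda>i. prod_list (map (X i) [0..<ns ! i])) [0..<length ns])
       = (\<Sum>\<sigma>\<in>{\<sigma>\<in>partitions (sum_list ns). collapse ns \<sigma> = p}.
            cum_part phiU iota \<sigma> (concat (map (\<lambda>i. map (X i) [0..<ns ! i]) [0..<length ns])))"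
    (is "cum_part phiU iota p ?Ys = (\<Sum>\<sigma>\<in>_. cum_part phiU iota \<sigma> ?Xs)")
proof -
  interpret finite_poset "partitions (length ns)" refines
    by (rule finite_poset_partitions)
  have len: "length ?Xs = sum_list ns" "length ?Ys = length ns"
    by (simp_all add: concat_eq_map_row_col)
  let ?g = "\<lambda>s. \<Sum>\<sigma>\<in>{\<sigma>\<in>partitions (sum_list ns). collapse ns \<sigma> = s}. cum_part phiU iota \<sigma> ?Xs"
  have "(\<Sum>s\<in>{s\<in>partitions (length ns). refines s q}. ?g s)
      = (\<Sum>s\<in>{s\<in>partitions (length ns). refines s q}. cum_part phiU iota s ?Ys)"
    if q: "q \<in> partitions (length ns)" for q
  proof -
    have "(\<Sum>s\<in>{s\<in>partitions (length ns). refines s q}. ?g s)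
        = (\<Sum>\<sigma>\<in>{\<sigma>\<in>partitions (length ?Xs). refines \<sigma> (tilde ns q)}. cum_part phiU iota \<sigma> ?Xs)"
      unfolding len by (rule sum_collapse_fibres_below[OF pos q])
    also have "\<dots> = phi_part phiU iota (tilde ns q) ?Xs"
      by (rule moment_cumulant_formula) (simp add: len tilde_in_partitions[OF pos q])
    also have "\<dots> = phi_part phiU iota q ?Ys"
      by (rule phi_part_tilde[OF pos q])
    also have "\<dots> = (\<Sum>s\<in>{s\<in>partitions (length ns). refines s q}. cum_part phiU iota s ?Ys)"
      using moment_cumulant_formula[where \<pi> = q and Ys = ?Ys and phiU = phiU and iota = iota] q
      by (simp add: len)
    finally show ?thesis .
  qed
  then have "?g p = cum_part phiU iota p ?Ys"
    by (intro sum_below_eqD[OF _ p]) blast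
  then show ?thesis by simp
qed

end

theorem proposition3p3:
  fixes sclA :: "complex \<Rightarrow> 'a::ring_1 \<Rightarrow> 'a" and phi :: "'a \<Rightarrow> complex"
    and sclU :: "complex \<Rightarrow> 'u::ring_1 \<Rightarrow> 'u" and phiU :: "'u \<Rightarrow> complex"
    and iota :: "nat \<Rightarrow> 'a \<Rightarrow> 'u"
    and X :: "nat \<Rightarrow> nat \<Rightarrow> 'a" and ns :: "nat list"
  assumes "exch_system sclA phi sclU phiU iota"
    and "ns \<noteq> []"
    and "\<forall>i<length ns. 1 \<le> ns ! i"
  shows "cum phiU iota (map (\<lambda>i. prod_list (map (X i) [0..<ns ! i])) [0..<length ns])
       = (\<Sum>\<sigma>\<in>{\<sigma>\<in>partitions (sum_list ns). indecomposable ns \<sigma>}.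
            cum_part phiU iota \<sigma> (concat (map (\<lambda>i. map (X i) [0..<ns ! i]) [0..<length ns])))"
proof -
  have "{\<sigma>\<in>partitions (sum_list ns). indecomposable ns \<sigma>}
      = {\<sigma>\<in>partitions (sum_list ns). collapse ns \<sigma> = hat1 (length ns)}"
    using indecomposable_iff_collapse[OF assms(3,2)] by blast
  moreover have "hat1 (length ns) \<in> partitions (length ns)"
    using assms(2) by (simp add: hat1_in_partitions)
  ultimately show ?thesis
    unfolding cum_def
    using exch_system.cum_part_products_eq_sum_collapse[OF assms(1,3)] by simp
qed

end
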